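(* (Soundness) For every sequent $\Gamma\vdash\Delta$ of $\text{HXPath}_{\rm D}$: if $\Gamma\vdash\Delta$ is provable in $\mathbf{G}$ (written $\Gamma\vdash_{\mathbf G}\Delta$), then $\Gamma\vdash\Delta$ is valid.
   Context: Syntax of $\text{HXPath}_{\rm D}$: fix pairwise disjoint sets $\mathsf{Prop}$ (propositions, countably infinite), $\mathsf{Nom}$ (nominals, countably infinite), $\mathsf{Mod}$ (modalities, finite), $\mathsf{Cmp}$ (comparisons, finite). Path expressions $\alpha,\beta ::= \mathsf{a} \mid i{:} \mid \varphi? \mid \alpha\beta$ and node expressions $\varphi,\psi ::= p \mid i \mid \bot \mid \varphi\to\psi \mid @_i\varphi \mid \langle \mathsf{a}\rangle\varphi \mid \langle\alpha =_{\mathsf{c}} \beta\rangle \mid \langle \alpha\neq_{\mathsf{c}}\beta\rangle$, with $p\in\mathsf{Prop}$, $i\in\mathsf{Nom}$, $\mathsf{a}\in\mathsf{Mod}$, $\mathsf{c}\in\mathsf{Cmp}$. Abbreviations: $\top:=\bot\to\bot$, $\neg\varphi:=\varphi\to\bot$, $\varphi\lor\psi := \neg\varphi\to\psi$, $\varphi\land\psi:=\neg(\varphi\to\neg\psi)$, $\varphi\leftrightarrow\psi$ as usual; $\epsilon:=\top?$; $\langle j{:}\rangle\varphi := @_j\varphi$, $\langle\psi?\rangle\varphi:=\psi\land\varphi$, $\langle\alpha\beta\rangle\varphi:=\langle\alpha\rangle\langle\beta\rangle\varphi$, $[\alpha]\varphi:=\neg\langle\alpha\rangle\neg\varphi$.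 The symbol $\blacktriangle$ stands for either $=_{\mathsf{c}}$ or $\neq_{\mathsf{c}}$ (for some $\mathsf{c}$). Models: $\mathcal{M}=\langle N,\{R_{\mathsf a}\}_{\mathsf a\in\mathsf{Mod}},\{\approx_{\mathsf c}\}_{\mathsf c\in\mathsf{Cmp}},g,V\rangle$ with $N\neq\emptyset$, each $R_{\mathsf a}\subseteq N\times N$, each $\approx_{\mathsf c}$ an equivalence relation on $N$, $g:\mathsf{Nom}\to N$, $V:\mathsf{Prop}\to 2^N$. Semantics: $\mathcal M,n,n'\Vdash \mathsf a$ iff $nR_{\mathsf a}n'$; $\mathcal M,n,n'\Vdash i{:}$ iff $g(i)=n'$; $\mathcal M,n,n'\Vdash\varphi?$ iff $n=n'$ and $\mathcal M,n\Vdash\varphi$; $\mathcal M,n,n'\Vdash\alpha\beta$ iff there is $n''$ with $\mathcal M,n,n''\Vdash\alpha$ and $\mathcal M,n'',n'\Vdash\beta$; $\mathcal M,n\Vdash p$ iff $n\in V(p)$; $\mathcal M,n\Vdash i$ iff $g(i)=n$; $\bot$ never holds; $\to$ classical; $\mathcal M,n\Vdash @_i\varphi$ iff $\mathcal M,g(i)\Vdash\varphi$; $\mathcal M,n\Vdash\langle\mathsf a\rangle\varphi$ iff some $n'$ has $nR_{\mathsf a}n'$ and $\mathcal M,n'\Vdash\varphi$; $\mathcal M,n\Vdash\langle\alpha=_{\mathsf c}\beta\rangle$ (resp. $\langle\alpha\neq_{\mathsf c}\beta\rangle$) iff there are $n',n''$ with $\mathcal M,n,n'\Vdash\alpha$,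 $\mathcal M,n,n''\Vdash\beta$ and $n'\approx_{\mathsf c}n''$ (resp. $n'\not\approx_{\mathsf c}n''$). Sequents: a sequent $\Gamma\vdash\Delta$ consists of finite (possibly empty) sets $\Gamma,\Delta$ of node expressions each of the form $\langle i{:}\blacktriangle j{:}\rangle$ or $@_i\varphi$. It is valid iff for every model $\mathcal M$ and node $n$, if $\mathcal M,n\Vdash\gamma$ for all $\gamma\in\Gamma$ then $\mathcal M,n\Vdash\delta$ for some $\delta\in\Delta$. Notation "$\varphi,\Gamma$" means $\{\varphi\}\cup\Gamma$. The calculus $\mathbf{G}$ (each rule written premisses $\Rightarrow$ conclusion): (Ax) axiom $\varphi,\Gamma\vdash\Delta,\varphi$ where $\varphi$ is of the form $@_ip$, $@_ij$ or $\langle i{:}=_{\mathsf c}j{:}\rangle$; ($\bot$) axiom $@_i\bot,\Gamma\vdash\Delta$; ($\to$L) $\Gamma\vdash\Delta,@_i\varphi$ and $@_i\psi,\Gamma\vdash\Delta$ $\Rightarrow$ $@_i(\varphi\to\psi),\Gamma\vdash\Delta$; ($\to$R) $@_i\varphi,\Gamma\vdash\Delta,@_i\psi\Rightarrow\Gamma\vdash\Delta,@_i(\varphi\to\psi)$; ($@$T) $@_ii,\Gamma\vdash\Delta\Rightarrow\Gamma\vdash\Delta$; ($@5$) $@_jk,@_ij,@_ik,\Gamma\vdash\Delta\Rightarrow @_ij,@_ik,\Gamma\vdash\Delta$; (Nom) $@_ij,\Gamma\vdash\Delta\Rightarrow\Gamma\vdash\Delta$, $j$ not in the conclusion; (S$_1$)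 $@_j\varphi,@_ij,@_i\varphi,\Gamma\vdash\Delta\Rightarrow @_ij,@_i\varphi,\Gamma\vdash\Delta$, $\varphi$ of the form $p$, $\bot$ or $\langle\mathsf a\rangle k$; (S$_2$) $@_i\langle\mathsf a\rangle k,@_jk,@_i\langle\mathsf a\rangle j,\Gamma\vdash\Delta\Rightarrow @_jk,@_i\langle\mathsf a\rangle j,\Gamma\vdash\Delta$; (S$_3$) $\langle j{:}=_{\mathsf c}k{:}\rangle,@_ij,\langle i{:}=_{\mathsf c}k{:}\rangle,\Gamma\vdash\Delta\Rightarrow @_ij,\langle i{:}=_{\mathsf c}k{:}\rangle,\Gamma\vdash\Delta$; ($@$L) $@_i\varphi,\Gamma\vdash\Delta\Rightarrow @_j@_i\varphi,\Gamma\vdash\Delta$; ($@$R) $\Gamma\vdash\Delta,@_i\varphi\Rightarrow\Gamma\vdash\Delta,@_j@_i\varphi$; ($\langle\mathsf a\rangle$L) $@_i\langle\mathsf a\rangle j,@_j\varphi,\Gamma\vdash\Delta\Rightarrow @_i\langle\mathsf a\rangle\varphi,\Gamma\vdash\Delta$, $j$ not in the conclusion; ($\langle\mathsf a\rangle$R) $@_i\langle\mathsf a\rangle j,\Gamma\vdash\Delta,@_i\langle\mathsf a\rangle\varphi,@_j\varphi\Rightarrow @_i\langle\mathsf a\rangle j,\Gamma\vdash\Delta,@_i\langle\mathsf a\rangle\varphi$; ($\langle\blacktriangle\rangle$L) $@_i\langle\alpha\rangle j,@_i\langle\beta\rangle k,\langle j{:}\blacktriangle k{:}\rangle,\Gamma\vdash\Delta\Rightarrow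 @_i\langle\alpha\blacktriangle\beta\rangle,\Gamma\vdash\Delta$, $j,k$ distinct and not in the conclusion; ($\langle\blacktriangle\rangle$R) $@_i\langle\alpha\rangle j,@_i\langle\beta\rangle k,\Gamma\vdash\Delta,@_i\langle\alpha\blacktriangle\beta\rangle,\langle j{:}\blacktriangle k{:}\rangle\Rightarrow @_i\langle\alpha\rangle j,@_i\langle\beta\rangle k,\Gamma\vdash\Delta,@_i\langle\alpha\blacktriangle\beta\rangle$; (EqT) $\langle i{:}=_{\mathsf c}i{:}\rangle,\Gamma\vdash\Delta\Rightarrow\Gamma\vdash\Delta$; (Eq5) $\langle j{:}=_{\mathsf c}k{:}\rangle,\langle i{:}=_{\mathsf c}j{:}\rangle,\langle i{:}=_{\mathsf c}k{:}\rangle,\Gamma\vdash\Delta\Rightarrow\langle i{:}=_{\mathsf c}j{:}\rangle,\langle i{:}=_{\mathsf c}k{:}\rangle,\Gamma\vdash\Delta$; (NEqL) $\Gamma\vdash\Delta,\langle i{:}=_{\mathsf c}j{:}\rangle\Rightarrow\langle i{:}\neq_{\mathsf c}j{:}\rangle,\Gamma\vdash\Delta$; (NEqR) $\langle i{:}=_{\mathsf c}j{:}\rangle,\Gamma\vdash\Delta\Rightarrow\Gamma\vdash\Delta,\langle i{:}\neq_{\mathsf c}j{:}\rangle$; (Cut) $\Gamma\vdash\Delta,\varphi$ and $\varphi,\Gamma'\vdash\Delta'\Rightarrow\Gamma,\Gamma'\vdash\Delta,\Delta'$; (WL) $\Gamma\vdash\Delta\Rightarrow\varphi,\Gamma\vdash\Delta$;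 (WR) $\Gamma\vdash\Delta\Rightarrow\Gamma\vdash\Delta,\varphi$. Here $@_i\langle\alpha\rangle j$ for a path $\alpha$ is understood via the abbreviations above. A derivation is a finite tree of sequents in which each non-leaf node is the conclusion of an instance of a rule of $\mathbf G$ whose premisses are its children. A sequent is provable in $\mathbf G$ if it is the root of a derivation all of whose leaves are instances of (Ax) or ($\bot$). *)

theory Defs
  imports Main
begin

text \<open>Syntax of HXPath_D. Propositions and nominals are indexed by nat (countably
infinite); modalities 'm and comparisons 'c are type parameters (required to be
finite in the main theorem).\<close>

datatype ('m, 'c) path =
    PMod 'm
  | PNom nat
  | PTest "('m, 'c) node"
  | PComp "('m, 'c) path" "('m, 'c) path"
and ('m, 'c) node =
    NProp nat
  | NNom nat
  | NBot
  | NImp "('m, 'c) node" "('m, 'c) node"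
  | NAt nat "('m, 'c) node"
  | NDia 'm "('m, 'c) node"
  | NEq "('m, 'c) path" 'c "('m, 'c) path"
  | NNeq "('m, 'c) path" 'c "('m, 'c) path"

definition NTop :: "('m, 'c) node" where "NTop = NImp NBot NBot"
definition NNot :: "('m, 'c) node \<Rightarrow> ('m, 'c) node" where "NNot \<phi> = NImp \<phi> NBot"
definition NAnd :: "('m, 'c) node \<Rightarrow> ('m, 'c) node \<Rightarrow> ('m, 'c) node" where
  "NAnd \<phi> \<psi> = NNot (NImp \<phi> (NNot \<psi>))"

fun pdia :: "('m, 'c) path \<Rightarrow> ('m, 'c) node \<Rightarrow> ('m, 'c) node" where
  "pdia (PMod a) \<phi> = NDia a \<phi>"
| "pdia (PNom j) \<phi> = NAt j \<phi>"
| "pdia (PTest \<psi>) \<phi> = NAnd \<psi> \<phi>"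
| "pdia (PComp \<alpha> \<beta>) \<phi> = pdia \<alpha> (pdia \<beta> \<phi>)"

text \<open>The symbol \<blacktriangle>: True means =_c, False means \<noteq>_c.\<close>
definition cmp :: "bool \<Rightarrow> ('m, 'c) path \<Rightarrow> 'c \<Rightarrow> ('m, 'c) path \<Rightarrow> ('m, 'c) node" where
  "cmp b \<alpha> c \<beta> = (if b then NEq \<alpha> c \<beta> else NNeq \<alpha> c \<beta>)"

primrec noms_path :: "('m, 'c) path \<Rightarrow> nat set"
  and noms_node :: "('m, 'c) node \<Rightarrow> nat set" where
  "noms_path (PMod a) = {}"
| "noms_path (PNom i) = {i}"
| "noms_path (PTest \<phi>) = noms_node \<phi>"
| "noms_path (PComp \<alpha> \<beta>) = noms_path \<alpha> \<union> noms_path \<beta>"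
| "noms_node (NProp p) = {}"
| "noms_node (NNom i) = {i}"
| "noms_node NBot = {}"
| "noms_node (NImp \<phi> \<psi>) = noms_node \<phi> \<union> noms_node \<psi>"
| "noms_node (NAt i \<phi>) = insert i (noms_node \<phi>)"
| "noms_node (NDia a \<phi>) = noms_node \<phi>"
| "noms_node (NEq \<alpha> c \<beta>) = noms_path \<alpha> \<union> noms_path \<beta>"
| "noms_node (NNeq \<alpha> c \<beta>) = noms_path \<alpha> \<union> noms_path \<beta>"

type_synonym ('m, 'c) sequent = "('m, 'c) node set \<times> ('m, 'c) node set"

definition noms_seq :: "('m, 'c) sequent \<Rightarrow> nat set" where
  "noms_seq s = (\<Union>\<phi>\<in>fst s \<union> snd s. noms_node \<phi>)"

definition seq_formula :: "('m, 'c) node \<Rightarrow> bool" where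
  "seq_formula \<phi> \<longleftrightarrow> (\<exists>b i c j. \<phi> = cmp b (PNom i) c (PNom j)) \<or> (\<exists>i \<psi>. \<phi> = NAt i \<psi>)"

definition is_sequent :: "('m, 'c) sequent \<Rightarrow> bool" where
  "is_sequent s \<longleftrightarrow> finite (fst s) \<and> finite (snd s) \<and> (\<forall>\<phi>\<in>fst s \<union> snd s. seq_formula \<phi>)"

record ('w, 'm, 'c) model =
  dom :: "'w set"
  rel :: "'m \<Rightarrow> ('w \<times> 'w) set"
  eqv :: "'c \<Rightarrow> ('w \<times> 'w) set"
  gnom :: "nat \<Rightarrow> 'w"
  val :: "nat \<Rightarrow> 'w set"

definition is_model :: "('w, 'm, 'c) model \<Rightarrow> bool" where
  "is_model M \<longleftrightarrow> dom M \<noteq> {}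
     \<and> (\<forall>a. rel M a \<subseteq> dom M \<times> dom M)
     \<and> (\<forall>c. equiv (dom M) (eqv M c))
     \<and> (\<forall>i. gnom M i \<in> dom M)
     \<and> (\<forall>p. val M p \<subseteq> dom M)"

primrec psat :: "('w, 'm, 'c) model \<Rightarrow> ('m, 'c) path \<Rightarrow> 'w \<Rightarrow> 'w \<Rightarrow> bool"
  and nsat :: "('w, 'm, 'c) model \<Rightarrow> ('m, 'c) node \<Rightarrow> 'w \<Rightarrow> bool" where
  "psat M (PMod a) n n' \<longleftrightarrow> (n, n') \<in> rel M a"
| "psat M (PNom i) n n' \<longleftrightarrow> gnom M i = n'"
| "psat M (PTest \<phi>) n n' \<longleftrightarrow> n = n' \<and> nsat M \<phi> n"
| "psat M (PComp \<alpha> \<beta>) n n' \<longleftrightarrow> (\<exists>n''\<in>dom M. psat M \<alpha> n n'' \<and> psat M \<beta> n'' n')"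
| "nsat M (NProp p) n \<longleftrightarrow> n \<in> val M p"
| "nsat M (NNom i) n \<longleftrightarrow> gnom M i = n"
| "nsat M NBot n \<longleftrightarrow> False"
| "nsat M (NImp \<phi> \<psi>) n \<longleftrightarrow> (nsat M \<phi> n \<longrightarrow> nsat M \<psi> n)"
| "nsat M (NAt i \<phi>) n \<longleftrightarrow> nsat M \<phi> (gnom M i)"
| "nsat M (NDia a \<phi>) n \<longleftrightarrow> (\<exists>n'\<in>dom M. (n, n') \<in> rel M a \<and> nsat M \<phi> n')"
| "nsat M (NEq \<alpha> c \<beta>) n \<longleftrightarrow> (\<exists>n'\<in>dom M. \<exists>n''\<in>dom M.
      psat M \<alpha> n n' \<and> psat M \<beta> n n'' \<and> (n', n'') \<in> eqv M c)"
| "nsat M (NNeq \<alpha> c \<beta>) n \<longleftrightarrow> (\<exists>n'\<in>dom M. \<exists>n''\<in>dom M.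
      psat M \<alpha> n n' \<and> psat M \<beta> n n'' \<and> (n', n'') \<notin> eqv M c)"

text \<open>Validity over all models whose nodes are drawn from type 'w (the theorem
  is universally quantified over 'w).\<close>
definition valid :: "'w itself \<Rightarrow> ('m, 'c) sequent \<Rightarrow> bool" where
  "valid _ s \<longleftrightarrow> (\<forall>M :: ('w, 'm, 'c) model. is_model M \<longrightarrow> (\<forall>n\<in>dom M.
      (\<forall>\<gamma>\<in>fst s. nsat M \<gamma> n) \<longrightarrow> (\<exists>\<delta>\<in>snd s. nsat M \<delta> n)))"

text \<open>Rule instances of the calculus G: grule premisses conclusion.\<close>
abbreviation Ateq :: "nat \<Rightarrow> 'c \<Rightarrow> nat \<Rightarrow> ('m, 'c) node" where
  "Ateq i c j \<equiv> NEq (PNom i) c (PNom j)"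

inductive grule :: "('m, 'c) sequent list \<Rightarrow> ('m, 'c) sequent \<Rightarrow> bool" where
  Ax: "\<phi> = NAt i (NProp p) \<or> \<phi> = NAt i (NNom j) \<or> \<phi> = Ateq i c j
        \<Longrightarrow> grule [] (insert \<phi> \<Gamma>, insert \<phi> \<Delta>)"
| BotAx: "grule [] (insert (NAt i NBot) \<Gamma>, \<Delta>)"
| ImpL: "grule [(\<Gamma>, insert (NAt i \<phi>) \<Delta>), (insert (NAt i \<psi>) \<Gamma>, \<Delta>)]
           (insert (NAt i (NImp \<phi> \<psi>)) \<Gamma>, \<Delta>)"
| ImpR: "grule [(insert (NAt i \<phi>) \<Gamma>, insert (NAt i \<psi>) \<Delta>)]
           (\<Gamma>, insert (NAt i (NImp \<phi> \<psi>)) \<Delta>)"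
| AtT: "grule [(insert (NAt i (NNom i)) \<Gamma>, \<Delta>)] (\<Gamma>, \<Delta>)"
| At5: "grule [(insert (NAt j (NNom k)) (insert (NAt i (NNom j)) (insert (NAt i (NNom k)) \<Gamma>)), \<Delta>)]
           (insert (NAt i (NNom j)) (insert (NAt i (NNom k)) \<Gamma>), \<Delta>)"
| Nom: "j \<notin> noms_seq (\<Gamma>, \<Delta>) \<Longrightarrow> grule [(insert (NAt i (NNom j)) \<Gamma>, \<Delta>)] (\<Gamma>, \<Delta>)"
| S1: "(\<exists>p. \<phi> = NProp p) \<or> \<phi> = NBot \<or> (\<exists>a k. \<phi> = NDia a (NNom k)) \<Longrightarrow>
        grule [(insert (NAt j \<phi>) (insert (NAt i (NNom j)) (insert (NAt i \<phi>) \<Gamma>)), \<Delta>)]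
           (insert (NAt i (NNom j)) (insert (NAt i \<phi>) \<Gamma>), \<Delta>)"
| S2: "grule [(insert (NAt i (NDia a (NNom k))) (insert (NAt j (NNom k)) (insert (NAt i (NDia a (NNom j))) \<Gamma>)), \<Delta>)]
           (insert (NAt j (NNom k)) (insert (NAt i (NDia a (NNom j))) \<Gamma>), \<Delta>)"
| S3: "grule [(insert (Ateq j c k) (insert (NAt i (NNom j)) (insert (Ateq i c k) \<Gamma>)), \<Delta>)]
           (insert (NAt i (NNom j)) (insert (Ateq i c k) \<Gamma>), \<Delta>)"
| AtL: "grule [(insert (NAt i \<phi>) \<Gamma>, \<Delta>)] (insert (NAt j (NAt i \<phi>)) \<Gamma>, \<Delta>)"
| AtR: "grule [(\<Gamma>, insert (NAt i \<phi>) \<Delta>)] (\<Gamma>, insert (NAt j (NAt i \<phi>)) \<Delta>)"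
| DiaL: "j \<notin> noms_seq (insert (NAt i (NDia a \<phi>)) \<Gamma>, \<Delta>) \<Longrightarrow>
        grule [(insert (NAt i (NDia a (NNom j))) (insert (NAt j \<phi>) \<Gamma>), \<Delta>)]
           (insert (NAt i (NDia a \<phi>)) \<Gamma>, \<Delta>)"
| DiaR: "grule [(insert (NAt i (NDia a (NNom j))) \<Gamma>, insert (NAt i (NDia a \<phi>)) (insert (NAt j \<phi>) \<Delta>))]
           (insert (NAt i (NDia a (NNom j))) \<Gamma>, insert (NAt i (NDia a \<phi>)) \<Delta>)"
| CmpL: "j \<noteq> k \<Longrightarrow> j \<notin> noms_seq (insert (NAt i (cmp b \<alpha> c \<beta>)) \<Gamma>, \<Delta>) \<Longrightarrow>
         k \<notin> noms_seq (insert (NAt i (cmp b \<alpha> c \<beta>)) \<Gamma>, \<Delta>) \<Longrightarrow>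
        grule [(insert (NAt i (pdia \<alpha> (NNom j))) (insert (NAt i (pdia \<beta> (NNom k)))
                  (insert (cmp b (PNom j) c (PNom k)) \<Gamma>)), \<Delta>)]
           (insert (NAt i (cmp b \<alpha> c \<beta>)) \<Gamma>, \<Delta>)"
| CmpR: "grule [(insert (NAt i (pdia \<alpha> (NNom j))) (insert (NAt i (pdia \<beta> (NNom k))) \<Gamma>),
                 insert (NAt i (cmp b \<alpha> c \<beta>)) (insert (cmp b (PNom j) c (PNom k)) \<Delta>))]
           (insert (NAt i (pdia \<alpha> (NNom j))) (insert (NAt i (pdia \<beta> (NNom k))) \<Gamma>),
            insert (NAt i (cmp b \<alpha> c \<beta>)) \<Delta>)"
| EqT: "grule [(insert (Ateq i c i) \<Gamma>, \<Delta>)] (\<Gamma>, \<Delta>)"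
| Eq5: "grule [(insert (Ateq j c k) (insert (Ateq i c j) (insert (Ateq i c k) \<Gamma>)), \<Delta>)]
           (insert (Ateq i c j) (insert (Ateq i c k) \<Gamma>), \<Delta>)"
| NEqL: "grule [(\<Gamma>, insert (Ateq i c j) \<Delta>)] (insert (NNeq (PNom i) c (PNom j)) \<Gamma>, \<Delta>)"
| NEqR: "grule [(insert (Ateq i c j) \<Gamma>, \<Delta>)] (\<Gamma>, insert (NNeq (PNom i) c (PNom j)) \<Delta>)"
| Cut: "grule [(\<Gamma>, insert \<phi> \<Delta>), (insert \<phi> \<Gamma>', \<Delta>')] (\<Gamma> \<union> \<Gamma>', \<Delta> \<union> \<Delta>')"
| WL: "grule [(\<Gamma>, \<Delta>)] (insert \<phi> \<Gamma>, \<Delta>)"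
| WR: "grule [(\<Gamma>, \<Delta>)] (\<Gamma>, insert \<phi> \<Delta>)"

text \<open>Provability: roots of finite derivation trees of sequents whose leaves are
  axiom instances (rules with no premisses: Ax, BotAx).\<close>
inductive provable :: "('m, 'c) sequent \<Rightarrow> bool" where
  "grule ps s \<Longrightarrow> is_sequent s \<Longrightarrow> (\<forall>p\<in>set ps. provable p) \<Longrightarrow> provable s"

end

(* Soundness is checked rule by rule at a fixed node of a fixed model. All rules except
   Nom, the diamond-left rule and the comparison-left rule preserve truth there directly:
   S1-S3 and @5 hold because a nominal names a single node, EqT and Eq5 because each
   comparison relation is an equivalence. In the three remaining rules the fresh nominals
   are reinterpreted as the witnesses supplied by the conclusion (the node named by i, an
   a-successor, the endpoints of the two paths); as they do not occur in the conclusion,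
   this reinterpretation leaves the truth of the conclusion unchanged (sat_gnom_cong). *)
theory Submission
  imports Defs
begin

definition seq_holds :: "('w, 'm, 'c) model \<Rightarrow> 'w \<Rightarrow> ('m, 'c) sequent \<Rightarrow> bool" where
  "seq_holds M n s \<longleftrightarrow> (\<forall>\<gamma>\<in>fst s. nsat M \<gamma> n) \<longrightarrow> (\<exists>\<delta>\<in>snd s. nsat M \<delta> n)"

lemma valid_iff_seq_holds:
  "valid TYPE('w) s \<longleftrightarrow> (\<forall>M :: ('w, 'm, 'c) model. is_model M \<longrightarrow> (\<forall>n\<in>dom M. seq_holds M n s))"
  by (simp add: valid_def seq_holds_def)

lemma is_model_gnom: "is_model M \<Longrightarrow> gnom M i \<in> dom M"
  by (simp add: is_model_def)

lemma is_model_equiv: "is_model M \<Longrightarrow> equiv (dom M) (eqv M c)"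
  by (simp add: is_model_def)

lemma is_model_eqv_refl: "is_model M \<Longrightarrow> x \<in> dom M \<Longrightarrow> (x, x) \<in> eqv M c"
  using is_model_equiv[of M c] by (simp add: equiv_def refl_on_def)

lemma is_model_eqv_euclidean:
  "is_model M \<Longrightarrow> (x, y) \<in> eqv M c \<Longrightarrow> (x, z) \<in> eqv M c \<Longrightarrow> (y, z) \<in> eqv M c"
  using is_model_equiv[of M c] unfolding equiv_def sym_def trans_def by blast

lemma noms_node_cmp: "noms_node (cmp b \<alpha> c \<beta>) = noms_path \<alpha> \<union> noms_path \<beta>"
  by (simp add: cmp_def)

lemma nsat_cmp:
  "nsat M (cmp b \<alpha> c \<beta>) w \<longleftrightarrow>
    (\<exists>u\<in>dom M. \<exists>v\<in>dom M. psat M \<alpha> w u \<and> psat M \<beta> w v \<and> ((u, v) \<in> eqv M c \<longleftrightarrow> b))"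
  by (cases b) (auto simp: cmp_def)

lemma nsat_cmp_PNom:
  "is_model M \<Longrightarrow> nsat M (cmp b (PNom i) c (PNom j)) n \<longleftrightarrow> ((gnom M i, gnom M j) \<in> eqv M c \<longleftrightarrow> b)"
  by (auto simp: nsat_cmp is_model_gnom)

definition nom_variant :: "('w, 'm, 'c) model \<Rightarrow> nat set \<Rightarrow> (nat \<Rightarrow> 'w) \<Rightarrow> bool" where
  "nom_variant M J g \<longleftrightarrow> (\<forall>i. g i \<in> dom M) \<and> (\<forall>i\<in>J. g i = gnom M i)"

lemma is_model_nom_variant:
  "is_model M \<Longrightarrow> nom_variant M J g \<Longrightarrow> is_model (M\<lparr>gnom := g\<rparr>)"
  by (simp add: is_model_def nom_variant_def)

lemma sat_gnom_cong:
  "\<forall>i\<in>noms_path \<alpha>. g i = gnom M i \<Longrightarrow> psat (M\<lparr>gnom := g\<rparr>) \<alpha> x y = psat M \<alpha> x y"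
  "\<forall>i\<in>noms_node \<phi>. g i = gnom M i \<Longrightarrow> nsat (M\<lparr>gnom := g\<rparr>) \<phi> x = nsat M \<phi> x"
  by (induct \<alpha> and \<phi> arbitrary: x y and x) auto

lemma nsat_pdia:
  assumes "is_model M" "w \<in> dom M"
  shows "nsat M (pdia \<alpha> \<psi>) w \<longleftrightarrow> (\<exists>w'\<in>dom M. psat M \<alpha> w w' \<and> nsat M \<psi> w')"
  using assms(2)
proof (induction \<alpha> \<psi> arbitrary: w rule: pdia.induct)
  case (2 j \<phi>)
  then show ?case using is_model_gnom[OF assms(1)] by auto
qed (auto simp: NAnd_def NNot_def)

lemma nsat_cmp_via_nominals:
  assumes "is_model M" "w \<in> dom M"
    and "nsat M (pdia \<alpha> (NNom j)) w" "nsat M (pdia \<beta> (NNom k)) w"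
    and "nsat M (cmp b (PNom j) c (PNom k)) n"
  shows "nsat M (cmp b \<alpha> c \<beta>) w"
  using assms is_model_gnom[OF assms(1)]
  by (auto simp: nsat_pdia nsat_cmp nsat_cmp_PNom)

lemma seq_holds_by_fresh_nominals:
  fixes M :: "('w, 'm, 'c) model"
  assumes premiss: "valid TYPE('w) (A \<union> \<Gamma>, \<Delta>)"
    and "\<Gamma> \<subseteq> \<Gamma>'" and "is_model M" and "n \<in> dom M"
    and witness: "\<forall>\<gamma>\<in>\<Gamma>'. nsat M \<gamma> n \<Longrightarrow>
      \<exists>g. nom_variant M (noms_seq (\<Gamma>', \<Delta>)) g \<and> (\<forall>\<gamma>\<in>A. nsat (M\<lparr>gnom := g\<rparr>) \<gamma> n)"
  shows "seq_holds M n (\<Gamma>', \<Delta>)"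
  unfolding seq_holds_def fst_conv snd_conv
proof
  assume \<Gamma>': "\<forall>\<gamma>\<in>\<Gamma>'. nsat M \<gamma> n"
  then obtain g where g: "nom_variant M (noms_seq (\<Gamma>', \<Delta>)) g"
    and A: "\<forall>\<gamma>\<in>A. nsat (M\<lparr>gnom := g\<rparr>) \<gamma> n"
    using witness by blast
  have unchanged: "nsat (M\<lparr>gnom := g\<rparr>) \<phi> n = nsat M \<phi> n" if "\<phi> \<in> \<Gamma>' \<union> \<Delta>" for \<phi>
    using g that by (intro sat_gnom_cong(2)) (auto simp: nom_variant_def noms_seq_def)
  have "\<forall>\<gamma>\<in>A \<union> \<Gamma>. nsat (M\<lparr>gnom := g\<rparr>) \<gamma> n"
    using A \<Gamma>' unchanged \<open>\<Gamma> \<subseteq> \<Gamma>'\<close> by auto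
  moreover have "is_model (M\<lparr>gnom := g\<rparr>)"
    using \<open>is_model M\<close> g by (rule is_model_nom_variant)
  ultimately have "\<exists>\<delta>\<in>\<Delta>. nsat (M\<lparr>gnom := g\<rparr>) \<delta> n"
    using premiss \<open>n \<in> dom M\<close> by (auto simp: valid_def)
  then show "\<exists>\<delta>\<in>\<Delta>. nsat M \<delta> n"
    using unchanged by auto
qed

lemma Nom_sound:
  fixes M :: "('w, 'm, 'c) model"
  assumes "valid TYPE('w) (insert (NAt i (NNom j)) \<Gamma>, \<Delta>)" and "j \<notin> noms_seq (\<Gamma>, \<Delta>)"
    and "is_model M" and "n \<in> dom M"
  shows "seq_holds M n (\<Gamma>, \<Delta>)"
proof (rule seq_holds_by_fresh_nominals[where A = "{NAt i (NNom j)}" and \<Gamma> = \<Gamma>])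
  show "\<exists>g. nom_variant M (noms_seq (\<Gamma>, \<Delta>)) g \<and> (\<forall>\<gamma>\<in>{NAt i (NNom j)}. nsat (M\<lparr>gnom := g\<rparr>) \<gamma> n)"
    using assms(2) is_model_gnom[OF assms(3)]
    by (intro exI[of _ "(gnom M)(j := gnom M i)"]) (auto simp: nom_variant_def)
qed (use assms in simp_all)

lemma DiaL_sound:
  fixes M :: "('w, 'm, 'c) model"
  assumes "valid TYPE('w) (insert (NAt i (NDia a (NNom j))) (insert (NAt j \<phi>) \<Gamma>), \<Delta>)"
    and fresh: "j \<notin> noms_seq (insert (NAt i (NDia a \<phi>)) \<Gamma>, \<Delta>)"
    and "is_model M" and "n \<in> dom M"
  shows "seq_holds M n (insert (NAt i (NDia a \<phi>)) \<Gamma>, \<Delta>)"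
proof (rule seq_holds_by_fresh_nominals[where A = "{NAt i (NDia a (NNom j)), NAt j \<phi>}" and \<Gamma> = \<Gamma>])
  assume "\<forall>\<gamma>\<in>insert (NAt i (NDia a \<phi>)) \<Gamma>. nsat M \<gamma> n"
  then obtain w where w: "w \<in> dom M" "(gnom M i, w) \<in> rel M a" "nsat M \<phi> w"
    by auto
  have "j \<noteq> i" "j \<notin> noms_node \<phi>"
    using fresh by (auto simp: noms_seq_def)
  moreover have "nsat (M\<lparr>gnom := (gnom M)(j := w)\<rparr>) \<phi> w"
    using \<open>j \<notin> noms_node \<phi>\<close> w(3) by (subst sat_gnom_cong(2)) auto
  ultimately show "\<exists>g. nom_variant M (noms_seq (insert (NAt i (NDia a \<phi>)) \<Gamma>, \<Delta>)) g
      \<and> (\<forall>\<gamma>\<in>{NAt i (NDia a (NNom j)), NAt j \<phi>}. nsat (M\<lparr>gnom := g\<rparr>) \<gamma> n)"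
    using w fresh is_model_gnom[OF assms(3)]
    by (intro exI[of _ "(gnom M)(j := w)"]) (auto simp: nom_variant_def)
qed (use assms in auto)

lemma CmpL_sound:
  fixes M :: "('w, 'm, 'c) model" and \<Gamma> \<Delta> :: "('m, 'c) node set"
    and \<alpha> \<beta> :: "('m, 'c) path" and b :: bool and c :: 'c and i j k :: nat
  defines "\<Gamma>' \<equiv> insert (NAt i (cmp b \<alpha> c \<beta>)) \<Gamma>"
    and "A \<equiv> {NAt i (pdia \<alpha> (NNom j)), NAt i (pdia \<beta> (NNom k)), cmp b (PNom j) c (PNom k)}"
  assumes "valid TYPE('w) (A \<union> \<Gamma>, \<Delta>)"
    and "j \<noteq> k" and fresh: "j \<notin> noms_seq (\<Gamma>', \<Delta>)" "k \<notin> noms_seq (\<Gamma>', \<Delta>)"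
    and "is_model M" and "n \<in> dom M"
  shows "seq_holds M n (\<Gamma>', \<Delta>)"
proof (rule seq_holds_by_fresh_nominals[where A = A and \<Gamma> = \<Gamma>])
  assume "\<forall>\<gamma>\<in>\<Gamma>'. nsat M \<gamma> n"
  then obtain u v where uv: "u \<in> dom M" "v \<in> dom M"
    "psat M \<alpha> (gnom M i) u" "psat M \<beta> (gnom M i) v" "(u, v) \<in> eqv M c \<longleftrightarrow> b"
    by (auto simp: \<Gamma>'_def nsat_cmp)
  define g where "g = (gnom M)(j := u, k := v)"
  have variant: "nom_variant M (noms_seq (\<Gamma>', \<Delta>)) g"
    using uv(1,2) is_model_gnom[OF \<open>is_model M\<close>] fresh by (auto simp: nom_variant_def g_def)
  then have model: "is_model (M\<lparr>gnom := g\<rparr>)"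
    using \<open>is_model M\<close> by (rule is_model_nom_variant[rotated])
  have "j \<noteq> i" "k \<noteq> i" "\<forall>l\<in>noms_path \<alpha> \<union> noms_path \<beta>. l \<noteq> j \<and> l \<noteq> k"
    using fresh by (auto simp: \<Gamma>'_def noms_seq_def noms_node_cmp)
  then have "g i = gnom M i" "g j = u" "g k = v"
    and "psat (M\<lparr>gnom := g\<rparr>) \<alpha> = psat M \<alpha>" "psat (M\<lparr>gnom := g\<rparr>) \<beta> = psat M \<beta>"
    using \<open>j \<noteq> k\<close> by (auto intro!: ext sat_gnom_cong(1) simp: g_def)
  then have "\<forall>\<gamma>\<in>A. nsat (M\<lparr>gnom := g\<rparr>) \<gamma> n"
    using uv is_model_gnom[OF \<open>is_model M\<close>]
    by (auto simp: A_def nsat_pdia[OF model] nsat_cmp_PNom[OF model])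
  with variant show "\<exists>g. nom_variant M (noms_seq (\<Gamma>', \<Delta>)) g \<and> (\<forall>\<gamma>\<in>A. nsat (M\<lparr>gnom := g\<rparr>) \<gamma> n)"
    by blast
qed (use assms in \<open>auto simp: \<Gamma>'_def\<close>)

lemma grule_sound:
  fixes s :: "('m, 'c) sequent"
  assumes "grule ps s" and premisses: "\<forall>p\<in>set ps. valid TYPE('w) p"
  shows "valid TYPE('w) s"
  unfolding valid_iff_seq_holds
proof (intro allI impI ballI)
  fix M :: "('w, 'm, 'c) model" and n
  assume M: "is_model M" "n \<in> dom M"
  then have premisses_at_M: "\<forall>p\<in>set ps. seq_holds M n p"
    using premisses by (simp add: valid_iff_seq_holds)
  have gnom_dom: "gnom M i \<in> dom M" for i
    using M(1) by (rule is_model_gnom)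
  from assms(1) premisses_at_M show "seq_holds M n s"
  proof cases
    case Nom
    with premisses M show ?thesis by (auto intro: Nom_sound)
  next
    case DiaL
    with premisses M show ?thesis by (auto intro: DiaL_sound)
  next
    case CmpL
    with premisses M show ?thesis by (auto intro: CmpL_sound)
  next
    case CmpR
    with premisses_at_M M show ?thesis
      by (auto simp: seq_holds_def gnom_dom intro: nsat_cmp_via_nominals)
  next
    case EqT
    with premisses_at_M show ?thesis
      by (auto simp: seq_holds_def gnom_dom is_model_eqv_refl[OF M(1)])
  next
    case (Eq5 j c k i)
    with premisses_at_M show ?thesis
      using is_model_eqv_euclidean[OF M(1), of "gnom M i" "gnom M j" c "gnom M k"]
      by (auto simp: seq_holds_def gnom_dom)
  next
    case NEqR
    with premisses_at_M show ?thesis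
      by (auto simp: seq_holds_def gnom_dom)
  qed (auto simp: seq_holds_def)
qed

lemma provable_valid: "provable s \<Longrightarrow> valid TYPE('w) s"
  by (induction rule: provable.induct) (auto intro: grule_sound)

theorem theorem1:
  fixes \<Gamma> \<Delta> :: "('m::finite, 'c::finite) node set"
  assumes "is_sequent (\<Gamma>, \<Delta>)"
    and "provable (\<Gamma>, \<Delta>)"
  shows "valid TYPE('w) (\<Gamma>, \<Delta>)"
  using assms(2) by (rule provable_valid)

end
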